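(* Let $(X,\kappa)$ be a digital image and let $m$ be a positive integer. Then $(X,\kappa)$ has both the digital fixed point property with respect to $[0,m]_{\mathbb{Z}}$ and the digital homotopy fixed point property if and only if $X$ is a singleton.
   Context: A digital image is a pair $(X,\kappa)$ with $X \subset \mathbb{Z}^n$ and $\kappa$ an adjacency relation on $X$. For integers $a<b$, $[a,b]_{\mathbb{Z}} = \{z \in \mathbb{Z} : a \le z \le b\}$ with $2$-adjacency (consecutive integers adjacent). A function $f:(X,\kappa)\to(Y,\lambda)$ is $(\kappa,\lambda)$-continuous if whenever $x \leftrightarrow_\kappa x'$ we have $f(x)=f(x')$ or $f(x)\leftrightarrow_\lambda f(x')$. A $\kappa$-path is a $(2,\kappa)$-continuous function $p:[0,m]_{\mathbb{Z}} \to X$. The normal product adjacency $\kappa_*$ on $X \times [0,m]_{\mathbb{Z}}$: $(x,s) \leftrightarrow_{\kappa_*} (x',s')$ iff ($x \leftrightarrow_\kappa x'$ and $s=s'$) or ($x=x'$ and $|s-s'|=1$) or ($x \leftrightarrow_\kappa x'$ and $|s-s'|=1$). For $f: X \times [0,m]_{\mathbb{Z}} \to X$ and $t \in [0,m]_{\mathbb{Z}}$, $f_t: X\to X$ is $f_t(x)=f(x,t)$. $(X,\kappa)$ has the digital fixed point property with respect to $[0,m]_{\mathbb{Z}}$ if for every $(\kappa_*,\kappa)$-continuous $f: X \times [0,m]_{\mathbb{Z}} \to X$ there is a $\kappa$-path $p:[0,m]_{\mathbb{Z}} \to X$ with $f_t(p(t)) = p(t)$ for all $t$. A digital homotopy is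 a function $F: X \times [0,m]_{\mathbb{Z}} \to X$ ($m \in \mathbb{N}$) such that each $F_t$ is $(\kappa,\kappa)$-continuous and each $t \mapsto F(x,t)$ is $(2,\kappa)$-continuous. $(X,\kappa)$ has the digital homotopy fixed point property if for every digital homotopy $F: X \times [0,m]_{\mathbb{Z}} \to X$ (any $m$) there is a $\kappa$-path $p:[0,m]_{\mathbb{Z}}\to X$ with $F_t(p(t))=p(t)$ for all $t \in [0,m]_{\mathbb{Z}}$. *)

theory Defs
  imports "HOL-Analysis.Analysis"
begin

definition adjacency_on :: "(int ^ 'n) set \<Rightarrow> (int ^ 'n \<Rightarrow> int ^ 'n \<Rightarrow> bool) \<Rightarrow> bool" where
  "adjacency_on X \<kappa> \<longleftrightarrow>
     (\<forall>x y. \<kappa> x y \<longrightarrow> x \<in> X \<and> y \<in> X \<and> x \<noteq> y \<and> \<kappa> y x)"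

definition adj2 :: "int \<Rightarrow> int \<Rightarrow> bool" where
  "adj2 s t \<longleftrightarrow> \<bar>s - t\<bar> = 1"

definition digitally_continuous ::
  "'a set \<Rightarrow> ('a \<Rightarrow> 'a \<Rightarrow> bool) \<Rightarrow> 'b set \<Rightarrow> ('b \<Rightarrow> 'b \<Rightarrow> bool) \<Rightarrow> ('a \<Rightarrow> 'b) \<Rightarrow> bool" where
  "digitally_continuous X \<kappa> Y lam f \<longleftrightarrow>
     f ` X \<subseteq> Y \<and>
     (\<forall>x\<in>X. \<forall>x'\<in>X. \<kappa> x x' \<longrightarrow> f x = f x' \<or> lam (f x) (f x'))"

definition digital_path :: "'a set \<Rightarrow> ('a \<Rightarrow> 'a \<Rightarrow> bool) \<Rightarrow> int \<Rightarrow> (int \<Rightarrow> 'a) \<Rightarrow> bool" where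
  "digital_path X \<kappa> m p \<longleftrightarrow> digitally_continuous {0..m} adj2 X \<kappa> p"

definition normal_prod_adj :: "('a \<Rightarrow> 'a \<Rightarrow> bool) \<Rightarrow> 'a \<times> int \<Rightarrow> 'a \<times> int \<Rightarrow> bool" where
  "normal_prod_adj \<kappa> p q \<longleftrightarrow>
     (case p of (x, s) \<Rightarrow> case q of (x', s') \<Rightarrow>
        (\<kappa> x x' \<and> s = s') \<or> (x = x' \<and> \<bar>s - s'\<bar> = 1) \<or> (\<kappa> x x' \<and> \<bar>s - s'\<bar> = 1))"

definition fpp_wrt_interval :: "'a set \<Rightarrow> ('a \<Rightarrow> 'a \<Rightarrow> bool) \<Rightarrow> int \<Rightarrow> bool" where
  "fpp_wrt_interval X \<kappa> m \<longleftrightarrow>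
     (\<forall>f. digitally_continuous (X \<times> {0..m}) (normal_prod_adj \<kappa>) X \<kappa> f \<longrightarrow>
        (\<exists>p. digital_path X \<kappa> m p \<and> (\<forall>t\<in>{0..m}. f (p t, t) = p t)))"

definition digital_homotopy :: "'a set \<Rightarrow> ('a \<Rightarrow> 'a \<Rightarrow> bool) \<Rightarrow> int \<Rightarrow> ('a \<times> int \<Rightarrow> 'a) \<Rightarrow> bool" where
  "digital_homotopy X \<kappa> m F \<longleftrightarrow>
     (\<forall>t\<in>{0..m}. digitally_continuous X \<kappa> X \<kappa> (\<lambda>x. F (x, t))) \<and>
     (\<forall>x\<in>X. digitally_continuous {0..m} adj2 X \<kappa> (\<lambda>t. F (x, t)))"

definition homotopy_fpp :: "'a set \<Rightarrow> ('a \<Rightarrow> 'a \<Rightarrow> bool) \<Rightarrow> bool" where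
  "homotopy_fpp X \<kappa> \<longleftrightarrow>
     (\<forall>m::int. m \<ge> 1 \<longrightarrow> (\<forall>F. digital_homotopy X \<kappa> m F \<longrightarrow>
        (\<exists>p. digital_path X \<kappa> m p \<and> (\<forall>t\<in>{0..m}. F (p t, t) = p t))))"

end

theory Submission
  imports Defs
begin

text \<open>A digital image with two distinct points has a continuous self-map without fixed points:
  swap the two ends of an edge if there is one, and otherwise any map onto two points is
  continuous. Made constant in the time coordinate, such a map contradicts the fixed point
  property with respect to [0,m]; the identity shows that this property also excludes the
  empty image. So the forward direction needs only the fixed point property with respect to
  [0,m]. Conversely, on a singleton every map fixes the point and the constant path works.\<close>

lemma adjacency_on_symp_irreflp:
  assumes "adjacency_on X \<kappa>"
  shows "symp \<kappa>" "irreflp \<kappa>"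
  using assms unfolding adjacency_on_def symp_def irreflp_def by blast+

lemma fixed_point_free_self_map:
  assumes "symp \<kappa>" "irreflp \<kappa>"
    and "x0 \<in> X" "x1 \<in> X" "x0 \<noteq> x1"
  shows "\<exists>g. digitally_continuous X \<kappa> X \<kappa> g \<and> (\<forall>x\<in>X. g x \<noteq> x)"
proof (cases "\<exists>a\<in>X. \<exists>b\<in>X. \<kappa> a b")
  case True
  then obtain a b where ab: "a \<in> X" "b \<in> X" "\<kappa> a b" by blast
  then have "\<kappa> b a" "a \<noteq> b"
    using assms(1,2) by (auto dest: sympD irreflpD)
  let ?g = "\<lambda>x. if x = a then b else a"
  have "digitally_continuous X \<kappa> X \<kappa> ?g"
    unfolding digitally_continuous_def using ab \<open>\<kappa> b a\<close> by auto
  moreover have "\<forall>x\<in>X. ?g x \<noteq> x" using \<open>a \<noteq> b\<close> by auto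
  ultimately show ?thesis by blast
next
  case False
  let ?g = "\<lambda>x. if x = x0 then x1 else x0"
  have "digitally_continuous X \<kappa> X \<kappa> ?g"
    unfolding digitally_continuous_def using False assms(3,4) by auto
  moreover have "\<forall>x\<in>X. ?g x \<noteq> x" using assms(5) by auto
  ultimately show ?thesis by blast
qed

lemma digitally_continuous_fst:
  assumes "digitally_continuous X \<kappa> Y \<mu> g"
  shows "digitally_continuous (X \<times> T) (normal_prod_adj \<kappa>) Y \<mu> (g \<circ> fst)"
  using assms unfolding digitally_continuous_def normal_prod_adj_def by auto

lemma fpp_wrt_interval_fixed_point:
  assumes "fpp_wrt_interval X \<kappa> m" "0 \<le> m"
    and "digitally_continuous X \<kappa> X \<kappa> g"
  shows "\<exists>x\<in>X. g x = x"
proof -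
  obtain p where p: "digital_path X \<kappa> m p" "\<forall>t\<in>{0..m}. (g \<circ> fst) (p t, t) = p t"
    using assms(1) digitally_continuous_fst[OF assms(3)] unfolding fpp_wrt_interval_def by blast
  have "0 \<in> {0..m}" using assms(2) by simp
  then have "p 0 \<in> X" "g (p 0) = p 0"
    using p unfolding digital_path_def digitally_continuous_def by auto
  then show ?thesis by blast
qed

lemma fpp_wrt_interval_singleton:
  assumes "fpp_wrt_interval X \<kappa> m" "0 \<le> m" "symp \<kappa>" "irreflp \<kappa>"
  shows "\<exists>x. X = {x}"
proof -
  obtain x where "x \<in> X"
    using fpp_wrt_interval_fixed_point[OF assms(1,2), of id]
    unfolding digitally_continuous_def by auto
  moreover have "y = x" if "y \<in> X" for y
    using fixed_point_free_self_map[OF assms(3,4) \<open>x \<in> X\<close> that]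
      fpp_wrt_interval_fixed_point[OF assms(1,2)] by metis
  ultimately show ?thesis by blast
qed

lemma digital_path_const:
  assumes "x \<in> X"
  shows "digital_path X \<kappa> m (\<lambda>_. x)"
  using assms unfolding digital_path_def digitally_continuous_def by auto

lemma singleton_fpp_wrt_interval: "fpp_wrt_interval {x} \<kappa> m"
  unfolding fpp_wrt_interval_def
proof (intro allI impI)
  fix f assume "digitally_continuous ({x} \<times> {0..m}) (normal_prod_adj \<kappa>) {x} \<kappa> f"
  then have "\<forall>t\<in>{0..m}. f (x, t) = x"
    unfolding digitally_continuous_def by auto
  then show "\<exists>p. digital_path {x} \<kappa> m p \<and> (\<forall>t\<in>{0..m}. f (p t, t) = p t)"
    using digital_path_const[of x] by blast
qed

lemma singleton_homotopy_fpp: "homotopy_fpp {x} \<kappa>"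
  unfolding homotopy_fpp_def
proof (intro allI impI)
  fix m :: int and F assume "digital_homotopy {x} \<kappa> m F"
  then have "\<forall>t\<in>{0..m}. F (x, t) = x"
    unfolding digital_homotopy_def digitally_continuous_def by auto
  then show "\<exists>p. digital_path {x} \<kappa> m p \<and> (\<forall>t\<in>{0..m}. F (p t, t) = p t)"
    using digital_path_const[of x] by blast
qed

theorem mainTheorem3:
  fixes X :: "(int ^ 'n) set" and \<kappa> :: "int ^ 'n \<Rightarrow> int ^ 'n \<Rightarrow> bool" and m :: int
  assumes "adjacency_on X \<kappa>" and "m \<ge> 1"
  shows "(fpp_wrt_interval X \<kappa> m \<and> homotopy_fpp X \<kappa>) \<longleftrightarrow> (\<exists>x. X = {x})"
proof
  assume "fpp_wrt_interval X \<kappa> m \<and> homotopy_fpp X \<kappa>"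
  then have "fpp_wrt_interval X \<kappa> m" ..
  with assms show "\<exists>x. X = {x}"
    by (simp add: fpp_wrt_interval_singleton adjacency_on_symp_irreflp)
next
  assume "\<exists>x. X = {x}"
  then obtain x where "X = {x}" ..
  then show "fpp_wrt_interval X \<kappa> m \<and> homotopy_fpp X \<kappa>"
    by (simp add: singleton_fpp_wrt_interval singleton_homotopy_fpp)
qed

end
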